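(* Let $\Lambda$ be a unital commutative ring and $q$ a non-negative integer. A Lie algebra $\mathfrak g$ over $\Lambda$ is $q$-capable if and only if $\mathfrak g\cong\operatorname{IDer}(\mathfrak m,q)$ for some Lie algebra $\mathfrak m$ over $\Lambda$.
   Context: $Z_q(\mathfrak m)=\{e\in Z(\mathfrak m)\mid qe=0\}$, where $Z(\mathfrak m)$ is the center of $\mathfrak m$. A Lie algebra $\mathfrak g$ is $q$-capable if $\mathfrak g\cong\mathfrak m/Z_q(\mathfrak m)$ for some Lie algebra $\mathfrak m$. For a Lie algebra $\mathfrak m$, $\operatorname{Der}(\mathfrak m)$ is the Lie algebra of derivations (bracket $[d,d']=dd'-d'd$), $d_m$ is the inner derivation $m'\mapsto[m,m']$, $\operatorname{Der}(\mathfrak m)\times q\mathfrak m$ is the Lie algebra with bracket $[(d,qm),(d',qm')]=([d,d'],q[m,m'])$, and $\operatorname{IDer}(\mathfrak m,q)=\{(d_m,qm)\mid m\in\mathfrak m\}$ is its Lie subalgebra of inner $q$-derivations. *)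

theory Defs
  imports "HOL-Library.FuncSet"
begin

record ('r, 'a) lie_alg =
  car  :: "'a set"
  ladd :: "'a \<Rightarrow> 'a \<Rightarrow> 'a"
  lzero :: "'a"
  lneg :: "'a \<Rightarrow> 'a"
  lsmul :: "'r \<Rightarrow> 'a \<Rightarrow> 'a"
  lbr  :: "'a \<Rightarrow> 'a \<Rightarrow> 'a"

definition lie_algebra :: "('r::comm_ring_1, 'a) lie_alg \<Rightarrow> bool" where
  "lie_algebra L \<longleftrightarrow>
     lzero L \<in> car L \<and>
     (\<forall>x\<in>car L. \<forall>y\<in>car L. ladd L x y \<in> car L \<and> lbr L x y \<in> car L) \<and>
     (\<forall>x\<in>car L. lneg L x \<in> car L \<and> (\<forall>a. lsmul L a x \<in> car L)) \<and>
     (\<forall>x\<in>car L. \<forall>y\<in>car L. \<forall>z\<in>car L.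
        ladd L (ladd L x y) z = ladd L x (ladd L y z)) \<and>
     (\<forall>x\<in>car L. \<forall>y\<in>car L. ladd L x y = ladd L y x) \<and>
     (\<forall>x\<in>car L. ladd L (lzero L) x = x) \<and>
     (\<forall>x\<in>car L. ladd L (lneg L x) x = lzero L) \<and>
     (\<forall>a. \<forall>x\<in>car L. \<forall>y\<in>car L. lsmul L a (ladd L x y) = ladd L (lsmul L a x) (lsmul L a y)) \<and>
     (\<forall>a b. \<forall>x\<in>car L. lsmul L (a + b) x = ladd L (lsmul L a x) (lsmul L b x)) \<and>
     (\<forall>a b. \<forall>x\<in>car L. lsmul L (a * b) x = lsmul L a (lsmul L b x)) \<and>
     (\<forall>x\<in>car L. lsmul L 1 x = x) \<and>
     (\<forall>x\<in>car L. \<forall>y\<in>car L. \<forall>z\<in>car L.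
        lbr L (ladd L x y) z = ladd L (lbr L x z) (lbr L y z) \<and>
        lbr L z (ladd L x y) = ladd L (lbr L z x) (lbr L z y)) \<and>
     (\<forall>a. \<forall>x\<in>car L. \<forall>y\<in>car L.
        lbr L (lsmul L a x) y = lsmul L a (lbr L x y) \<and>
        lbr L x (lsmul L a y) = lsmul L a (lbr L x y)) \<and>
     (\<forall>x\<in>car L. lbr L x x = lzero L) \<and>
     (\<forall>x\<in>car L. \<forall>y\<in>car L. \<forall>z\<in>car L.
        ladd L (ladd L (lbr L x (lbr L y z)) (lbr L y (lbr L z x))) (lbr L z (lbr L x y)) = lzero L)"

definition lie_hom :: "('r, 'a) lie_alg \<Rightarrow> ('r, 'b) lie_alg \<Rightarrow> ('a \<Rightarrow> 'b) \<Rightarrow> bool" where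
  "lie_hom L M f \<longleftrightarrow> f \<in> car L \<rightarrow> car M \<and>
     (\<forall>x\<in>car L. \<forall>y\<in>car L. f (ladd L x y) = ladd M (f x) (f y) \<and>
                             f (lbr L x y) = lbr M (f x) (f y)) \<and>
     (\<forall>a. \<forall>x\<in>car L. f (lsmul L a x) = lsmul M a (f x))"

definition lie_iso :: "('r, 'a) lie_alg \<Rightarrow> ('r, 'b) lie_alg \<Rightarrow> ('a \<Rightarrow> 'b) \<Rightarrow> bool" where
  "lie_iso L M f \<longleftrightarrow> lie_hom L M f \<and> bij_betw f (car L) (car M)"

definition lie_isomorphic :: "('r, 'a) lie_alg \<Rightarrow> ('r, 'b) lie_alg \<Rightarrow> bool" where
  "lie_isomorphic L M \<longleftrightarrow> (\<exists>f. lie_iso L M f)"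

definition lcoset :: "('r, 'a) lie_alg \<Rightarrow> 'a \<Rightarrow> 'a set \<Rightarrow> 'a set" where
  "lcoset L x I = {ladd L x i | i. i \<in> I}"

definition lrep :: "'a set \<Rightarrow> 'a" where
  "lrep C = (SOME c. c \<in> C)"

definition lie_quot :: "('r, 'a) lie_alg \<Rightarrow> 'a set \<Rightarrow> ('r, 'a set) lie_alg" where
  "lie_quot L I =
    \<lparr> car = {lcoset L x I | x. x \<in> car L},
      ladd = (\<lambda>C D. lcoset L (ladd L (lrep C) (lrep D)) I),
      lzero = lcoset L (lzero L) I,
      lneg = (\<lambda>C. lcoset L (lneg L (lrep C)) I),
      lsmul = (\<lambda>a C. lcoset L (lsmul L a (lrep C)) I),
      lbr = (\<lambda>C D. lcoset L (lbr L (lrep C) (lrep D)) I) \<rparr>"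

definition lie_center :: "('r, 'a) lie_alg \<Rightarrow> 'a set" where
  "lie_center L = {e \<in> car L. \<forall>m\<in>car L. lbr L e m = lzero L}"

text \<open>Z_q(m) = {e in Z(m) | q e = 0}; q e is the q-fold sum, i.e. (of_nat q) acting.\<close>
definition Zq :: "('r::comm_ring_1, 'a) lie_alg \<Rightarrow> nat \<Rightarrow> 'a set" where
  "Zq L q = {e \<in> lie_center L. lsmul L (of_nat q) e = lzero L}"

text \<open>q-capable, with the witnessing Lie algebra ranging over carrier type 'b.\<close>
definition q_capable :: "('r::comm_ring_1, 'a) lie_alg \<Rightarrow> nat \<Rightarrow> 'b itself \<Rightarrow> bool" where
  "q_capable g q (_::'b itself) \<longleftrightarrow>
     (\<exists>M :: ('r, 'b) lie_alg. lie_algebra M \<and> lie_isomorphic g (lie_quot M (Zq M q)))"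

definition lie_der :: "('r, 'a) lie_alg \<Rightarrow> ('a \<Rightarrow> 'a) set" where
  "lie_der L = {d. d \<in> extensional (car L) \<and> d \<in> car L \<rightarrow> car L \<and>
     (\<forall>x\<in>car L. \<forall>y\<in>car L. d (ladd L x y) = ladd L (d x) (d y) \<and>
        d (lbr L x y) = ladd L (lbr L (d x) y) (lbr L x (d y))) \<and>
     (\<forall>a. \<forall>x\<in>car L. d (lsmul L a x) = lsmul L a (d x))}"

definition inner_der :: "('r, 'a) lie_alg \<Rightarrow> 'a \<Rightarrow> ('a \<Rightarrow> 'a)" where
  "inner_der L m = restrict (\<lambda>x. lbr L m x) (car L)"

definition qmult :: "('r::comm_ring_1, 'a) lie_alg \<Rightarrow> nat \<Rightarrow> 'a set" where
  "qmult L q = {lsmul L (of_nat q) m | m. m \<in> car L}"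

definition qpre :: "('r::comm_ring_1, 'a) lie_alg \<Rightarrow> nat \<Rightarrow> 'a \<Rightarrow> 'a" where
  "qpre L q x = (SOME m. m \<in> car L \<and> x = lsmul L (of_nat q) m)"

text \<open>The Lie algebra Der(m) x qm with [(d,qm),(d',qm')] = ([d,d'], q[m,m']).\<close>
definition der_times_q :: "('r::comm_ring_1, 'a) lie_alg \<Rightarrow> nat \<Rightarrow> ('r, ('a \<Rightarrow> 'a) \<times> 'a) lie_alg" where
  "der_times_q L q =
    \<lparr> car = lie_der L \<times> qmult L q,
      ladd = (\<lambda>(d, x) (d', x'). (restrict (\<lambda>y. ladd L (d y) (d' y)) (car L), ladd L x x')),
      lzero = (restrict (\<lambda>y. lzero L) (car L), lzero L),
      lneg = (\<lambda>(d, x). (restrict (\<lambda>y. lneg L (d y)) (car L), lneg L x)),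
      lsmul = (\<lambda>a (d, x). (restrict (\<lambda>y. lsmul L a (d y)) (car L), lsmul L a x)),
      lbr = (\<lambda>(d, x) (d', x').
               (restrict (\<lambda>y. ladd L (d (d' y)) (lneg L (d' (d y)))) (car L),
                lsmul L (of_nat q) (lbr L (qpre L q x) (qpre L q x')))) \<rparr>"

definition IDer :: "('r::comm_ring_1, 'a) lie_alg \<Rightarrow> nat \<Rightarrow> ('r, ('a \<Rightarrow> 'a) \<times> 'a) lie_alg" where
  "IDer L q = (der_times_q L q)
     \<lparr> car := {(inner_der L m, lsmul L (of_nat q) m) | m. m \<in> car L} \<rparr>"

end

theory Submission
  imports Defs
begin

text \<open>The map \<open>m \<mapsto> (d\<^sub>m, q m)\<close> is a surjective Lie homomorphism from \<open>m\<close> onto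
  \<open>IDer(m, q)\<close>, and two elements have the same image exactly when they differ by an element of
  \<open>Z\<^sub>q(m)\<close>: equal inner derivations means the difference is central, equal \<open>q\<close>-multiples means
  it is killed by \<open>q\<close>. Hence \<open>m/Z\<^sub>q(m) \<cong> IDer(m, q)\<close>, and both sides of the equivalence say
  that \<open>g\<close> is isomorphic to this algebra for some \<open>m\<close>.\<close>

definition lie_closed :: "('r, 'a) lie_alg \<Rightarrow> bool" where
  "lie_closed L \<longleftrightarrow>
     (\<forall>x\<in>car L. \<forall>y\<in>car L. ladd L x y \<in> car L \<and> lbr L x y \<in> car L) \<and>
     (\<forall>a. \<forall>x\<in>car L. lsmul L a x \<in> car L)"

lemma lie_iso_comp: "lie_iso L M f \<Longrightarrow> lie_iso M N h \<Longrightarrow> lie_iso L N (h \<circ> f)"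
  unfolding lie_iso_def lie_hom_def by (auto simp: bij_betw_trans Pi_iff)

lemma lie_isomorphic_trans:
  "lie_isomorphic L M \<Longrightarrow> lie_isomorphic M N \<Longrightarrow> lie_isomorphic L N"
  unfolding lie_isomorphic_def by (blast intro: lie_iso_comp)

lemma lie_iso_inv_into:
  assumes closed: "lie_closed L" and iso: "lie_iso L M f"
  shows "lie_iso M L (inv_into (car L) f)"
proof -
  let ?g = "inv_into (car L) f"
  have hom: "lie_hom L M f" and bij: "bij_betw f (car L) (car M)"
    using iso unfolding lie_iso_def by auto
  have bij_inv: "bij_betw ?g (car M) (car L)"
    using bij by (rule bij_betw_inv_into)
  have g_car: "?g y \<in> car L" if "y \<in> car M" for y
    using bij_inv that bij_betwE by blast
  have f_g: "f (?g y) = y" if "y \<in> car M" for y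
    using bij that bij_betw_inv_into_right by metis
  have g_f: "?g (f x) = x" if "x \<in> car L" for x
    using bij that bij_betw_inv_into_left by metis
  have "lie_hom M L ?g"
    unfolding lie_hom_def
  proof (intro conjI ballI allI)
    show "?g \<in> car M \<rightarrow> car L"
      using g_car by auto
  next
    fix x y assume "x \<in> car M" "y \<in> car M"
    then have "ladd M x y = f (ladd L (?g x) (?g y))" "lbr M x y = f (lbr L (?g x) (?g y))"
      using hom g_car f_g unfolding lie_hom_def by simp_all
    then show "?g (ladd M x y) = ladd L (?g x) (?g y)" "?g (lbr M x y) = lbr L (?g x) (?g y)"
      using closed g_car g_f \<open>x \<in> car M\<close> \<open>y \<in> car M\<close> unfolding lie_closed_def by simp_all
  next
    fix a x assume "x \<in> car M"
    then have "lsmul M a x = f (lsmul L a (?g x))"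
      using hom g_car f_g unfolding lie_hom_def by simp
    then show "?g (lsmul M a x) = lsmul L a (?g x)"
      using closed g_car g_f \<open>x \<in> car M\<close> unfolding lie_closed_def by simp
  qed
  then show ?thesis
    using bij_inv unfolding lie_iso_def by blast
qed

lemma lie_isomorphic_sym: "lie_closed L \<Longrightarrow> lie_isomorphic L M \<Longrightarrow> lie_isomorphic M L"
  unfolding lie_isomorphic_def by (blast intro: lie_iso_inv_into)

locale lie =
  fixes M :: "('r::comm_ring_1, 'a) lie_alg"
  assumes lie_algebra: "lie_algebra M"
begin

lemma zero_closed [simp]: "lzero M \<in> car M"
  and add_closed [simp]: "x \<in> car M \<Longrightarrow> y \<in> car M \<Longrightarrow> ladd M x y \<in> car M"
  and br_closed [simp]: "x \<in> car M \<Longrightarrow> y \<in> car M \<Longrightarrow> lbr M x y \<in> car M"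
  and neg_closed [simp]: "x \<in> car M \<Longrightarrow> lneg M x \<in> car M"
  and smul_closed [simp]: "x \<in> car M \<Longrightarrow> lsmul M a x \<in> car M"
  using lie_algebra unfolding lie_algebra_def by auto

lemma add_assoc: "x \<in> car M \<Longrightarrow> y \<in> car M \<Longrightarrow> z \<in> car M \<Longrightarrow>
    ladd M (ladd M x y) z = ladd M x (ladd M y z)"
  and add_comm: "x \<in> car M \<Longrightarrow> y \<in> car M \<Longrightarrow> ladd M x y = ladd M y x"
  and zero_add [simp]: "x \<in> car M \<Longrightarrow> ladd M (lzero M) x = x"
  and neg_add_cancel [simp]: "x \<in> car M \<Longrightarrow> ladd M (lneg M x) x = lzero M"
  and smul_add: "x \<in> car M \<Longrightarrow> y \<in> car M \<Longrightarrow>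
    lsmul M a (ladd M x y) = ladd M (lsmul M a x) (lsmul M a y)"
  and smul_mult: "x \<in> car M \<Longrightarrow> lsmul M (a * b) x = lsmul M a (lsmul M b x)"
  and br_add_left: "x \<in> car M \<Longrightarrow> y \<in> car M \<Longrightarrow> z \<in> car M \<Longrightarrow>
    lbr M (ladd M x y) z = ladd M (lbr M x z) (lbr M y z)"
  and br_add_right: "x \<in> car M \<Longrightarrow> y \<in> car M \<Longrightarrow> z \<in> car M \<Longrightarrow>
    lbr M z (ladd M x y) = ladd M (lbr M z x) (lbr M z y)"
  and br_smul_left: "x \<in> car M \<Longrightarrow> y \<in> car M \<Longrightarrow> lbr M (lsmul M a x) y = lsmul M a (lbr M x y)"
  and br_smul_right: "x \<in> car M \<Longrightarrow> y \<in> car M \<Longrightarrow> lbr M x (lsmul M a y) = lsmul M a (lbr M x y)"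
  and br_self: "x \<in> car M \<Longrightarrow> lbr M x x = lzero M"
  and jacobi: "x \<in> car M \<Longrightarrow> y \<in> car M \<Longrightarrow> z \<in> car M \<Longrightarrow>
    ladd M (ladd M (lbr M x (lbr M y z)) (lbr M y (lbr M z x))) (lbr M z (lbr M x y)) = lzero M"
  using lie_algebra unfolding lie_algebra_def by auto

lemma add_zero [simp]: "x \<in> car M \<Longrightarrow> ladd M x (lzero M) = x"
  using add_comm[of x "lzero M"] by simp

lemma add_neg_cancel [simp]: "x \<in> car M \<Longrightarrow> ladd M x (lneg M x) = lzero M"
  using add_comm[of x "lneg M x"] by simp

lemma add_left_cancel:
  assumes "x \<in> car M" "y \<in> car M" "z \<in> car M" and "ladd M x y = ladd M x z"
  shows "y = z"
proof -
  have "y = ladd M (lneg M x) (ladd M x y)"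
    using assms add_assoc[of "lneg M x" x y] by simp
  also have "\<dots> = ladd M (lneg M x) (ladd M x z)"
    using assms(4) by simp
  also have "\<dots> = z"
    using assms add_assoc[of "lneg M x" x z] by simp
  finally show ?thesis .
qed

lemma eq_neg_if_add_eq_zero:
  assumes "x \<in> car M" "y \<in> car M" "ladd M x y = lzero M"
  shows "x = lneg M y"
  using add_left_cancel[of y x "lneg M y"] assms add_comm[of x y] by simp

lemma eq_zero_if_add_self:
  assumes "x \<in> car M" "ladd M x x = x"
  shows "x = lzero M"
  using add_left_cancel[of x x "lzero M"] assms by simp

lemma neg_neg [simp]: "x \<in> car M \<Longrightarrow> lneg M (lneg M x) = x"
  by (rule eq_neg_if_add_eq_zero[symmetric]) simp_all

lemma neg_zero [simp]: "lneg M (lzero M) = lzero M"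
  by (rule eq_neg_if_add_eq_zero[symmetric]) simp_all

lemma neg_add_eq_zero_iff:
  assumes "x \<in> car M" "y \<in> car M"
  shows "ladd M (lneg M x) y = lzero M \<longleftrightarrow> x = y"
proof
  assume "ladd M (lneg M x) y = lzero M"
  then have "lneg M x = lneg M y"
    using assms by (simp add: eq_neg_if_add_eq_zero)
  then show "x = y"
    using assms neg_neg by metis
qed (use assms in simp)

lemma br_zero_left [simp]: "y \<in> car M \<Longrightarrow> lbr M (lzero M) y = lzero M"
  using eq_zero_if_add_self[of "lbr M (lzero M) y"] br_add_left[of "lzero M" "lzero M" y] by simp

lemma br_zero_right [simp]: "y \<in> car M \<Longrightarrow> lbr M y (lzero M) = lzero M"
  using eq_zero_if_add_self[of "lbr M y (lzero M)"] br_add_right[of "lzero M" "lzero M" y] by simp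

lemma smul_zero [simp]: "lsmul M a (lzero M) = lzero M"
  using eq_zero_if_add_self[of "lsmul M a (lzero M)"] smul_add[of "lzero M" "lzero M" a] by simp

lemma br_neg_left: "x \<in> car M \<Longrightarrow> y \<in> car M \<Longrightarrow> lbr M (lneg M x) y = lneg M (lbr M x y)"
  using eq_neg_if_add_eq_zero[of "lbr M (lneg M x) y" "lbr M x y"] br_add_left[of "lneg M x" x y]
  by simp

lemma br_neg_right: "x \<in> car M \<Longrightarrow> y \<in> car M \<Longrightarrow> lbr M y (lneg M x) = lneg M (lbr M y x)"
  using eq_neg_if_add_eq_zero[of "lbr M y (lneg M x)" "lbr M y x"] br_add_right[of "lneg M x" x y]
  by simp

lemma smul_neg: "x \<in> car M \<Longrightarrow> lsmul M a (lneg M x) = lneg M (lsmul M a x)"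
  using eq_neg_if_add_eq_zero[of "lsmul M a (lneg M x)" "lsmul M a x"] smul_add[of "lneg M x" x a]
  by simp

lemma smul_commute: "x \<in> car M \<Longrightarrow> lsmul M a (lsmul M b x) = lsmul M b (lsmul M a x)"
  using smul_mult[of x a b] smul_mult[of x b a] by (simp add: mult.commute)

lemma br_anticomm:
  assumes "x \<in> car M" "y \<in> car M"
  shows "lbr M x y = lneg M (lbr M y x)"
proof -
  have "lzero M = lbr M (ladd M x y) (ladd M x y)"
    using assms br_self by simp
  also have "\<dots> = ladd M (ladd M (lbr M x x) (lbr M y x)) (ladd M (lbr M x y) (lbr M y y))"
    using assms by (simp add: br_add_left br_add_right)
  also have "\<dots> = ladd M (lbr M y x) (lbr M x y)"
    using assms by (simp add: br_self)
  finally have "ladd M (lbr M x y) (lbr M y x) = lzero M"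
    using assms add_comm[of "lbr M y x" "lbr M x y"] by simp
  then show ?thesis
    using assms by (simp add: eq_neg_if_add_eq_zero)
qed

text \<open>The Jacobi identity in the form \<open>[d\<^sub>m, d\<^sub>n] = d\<^bsub>[m, n]\<^esub>\<close> for inner derivations.\<close>

lemma br_br_sub_br_br:
  assumes "m \<in> car M" "n \<in> car M" "y \<in> car M"
  shows "ladd M (lbr M m (lbr M n y)) (lneg M (lbr M n (lbr M m y))) = lbr M (lbr M m n) y"
proof -
  let ?A = "lbr M m (lbr M n y)" and ?B = "lbr M n (lbr M m y)" and ?C = "lbr M (lbr M m n) y"
  have "lbr M n (lbr M y m) = lneg M ?B"
    using assms br_anticomm[of y m] br_neg_right[of "lbr M m y" n] by simp
  moreover have "lbr M y (lbr M m n) = lneg M ?C"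
    using assms br_anticomm[of y "lbr M m n"] by simp
  ultimately have sum_zero: "ladd M (ladd M ?A (lneg M ?B)) (lneg M ?C) = lzero M"
    using jacobi[of m n y] assms by simp
  have "ladd M ?A (lneg M ?B) = lneg M (lneg M ?C)"
    by (rule eq_neg_if_add_eq_zero[OF _ _ sum_zero]) (simp_all add: assms)
  then show ?thesis
    using assms by simp
qed

end

definition additive_subgroup :: "('r, 'a) lie_alg \<Rightarrow> 'a set \<Rightarrow> bool" where
  "additive_subgroup M I \<longleftrightarrow> I \<subseteq> car M \<and> lzero M \<in> I \<and>
     (\<forall>x\<in>I. \<forall>y\<in>I. ladd M x y \<in> I) \<and> (\<forall>x\<in>I. lneg M x \<in> I)"

context lie
begin

lemma lrep_lcoset:
  assumes "additive_subgroup M I" "x \<in> car M"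
  obtains i where "i \<in> I" "lrep (lcoset M x I) = ladd M x i"
proof -
  have "x \<in> lcoset M x I"
    using assms unfolding lcoset_def additive_subgroup_def by force
  then have "lrep (lcoset M x I) \<in> lcoset M x I"
    unfolding lrep_def by (rule someI)
  then show ?thesis
    using that unfolding lcoset_def by blast
qed

lemma lcoset_add_member:
  assumes I: "additive_subgroup M I" and "x \<in> car M" "z \<in> I"
  shows "lcoset M (ladd M x z) I = lcoset M x I"
proof -
  have I_car: "i \<in> car M" if "i \<in> I" for i
    using I that unfolding additive_subgroup_def by auto
  have "ladd M (ladd M x z) i = ladd M x (ladd M z i)" if "i \<in> I" for i
    using assms that I_car by (simp add: add_assoc)
  moreover have "ladd M x i = ladd M (ladd M x z) (ladd M (lneg M z) i)" if "i \<in> I" for i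
    using assms that I_car by (simp add: add_assoc add_assoc[symmetric, of z "lneg M z"])
  ultimately show ?thesis
    using I \<open>z \<in> I\<close> unfolding lcoset_def additive_subgroup_def by blast
qed

lemma lie_closed_lie_quot:
  assumes "additive_subgroup M I"
  shows "lie_closed (lie_quot M I)"
proof -
  have "lrep (lcoset M x I) \<in> car M" if x: "x \<in> car M" for x
  proof -
    obtain i where "i \<in> I" "lrep (lcoset M x I) = ladd M x i"
      using lrep_lcoset[OF assms x] .
    then show ?thesis
      using assms x unfolding additive_subgroup_def by auto
  qed
  then show ?thesis
    unfolding lie_closed_def lie_quot_def by auto
qed

text \<open>No ideal property of \<open>I\<close> is needed: the quotient operations act on representatives,
  and \<open>\<pi>\<close> does not see the choice of representative.\<close>

lemma lie_quot_iso:
  assumes I: "additive_subgroup M I"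
    and hom: "lie_hom M N \<pi>" and onto: "\<pi> ` car M = car N"
    and fibres: "\<And>x y. x \<in> car M \<Longrightarrow> y \<in> car M \<Longrightarrow> \<pi> x = \<pi> y \<longleftrightarrow> ladd M (lneg M x) y \<in> I"
  shows "lie_iso (lie_quot M I) N (\<lambda>C. \<pi> (lrep C))"
proof -
  have I_car: "i \<in> car M" if "i \<in> I" for i
    using I that unfolding additive_subgroup_def by auto
  have rep: "lrep (lcoset M x I) \<in> car M \<and> \<pi> (lrep (lcoset M x I)) = \<pi> x" if x: "x \<in> car M" for x
  proof -
    obtain i where "i \<in> I" "lrep (lcoset M x I) = ladd M x i"
      using lrep_lcoset[OF I x] .
    moreover have "ladd M (lneg M x) (ladd M x i) = i"
      using x I_car[OF \<open>i \<in> I\<close>] by (simp add: add_assoc[symmetric])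
    ultimately show ?thesis
      using x I_car fibres[of x "ladd M x i"] by auto
  qed
  have quot_car: "car (lie_quot M I) = (\<lambda>x. lcoset M x I) ` car M"
    unfolding lie_quot_def by auto
  have coset_eq: "lcoset M x I = lcoset M y I"
    if xy: "x \<in> car M" "y \<in> car M" and "\<pi> (lrep (lcoset M x I)) = \<pi> (lrep (lcoset M y I))"
    for x y
  proof -
    have "ladd M (lneg M x) y \<in> I"
      using that rep fibres by simp
    moreover have "y = ladd M x (ladd M (lneg M x) y)"
      using xy by (simp add: add_assoc[symmetric])
    ultimately show ?thesis
      using lcoset_add_member[OF I xy(1)] by metis
  qed
  have "lie_hom (lie_quot M I) N (\<lambda>C. \<pi> (lrep C))"
    unfolding lie_hom_def quot_car
    using hom rep by (auto simp: lie_quot_def lie_hom_def)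
  moreover have "inj_on (\<lambda>C. \<pi> (lrep C)) (car (lie_quot M I))"
    unfolding inj_on_def quot_car using coset_eq by blast
  moreover have "(\<lambda>C. \<pi> (lrep C)) ` car (lie_quot M I) = car N"
    unfolding quot_car image_image using rep onto by (auto simp: image_iff)
  ultimately show ?thesis
    unfolding lie_iso_def bij_betw_def by blast
qed

end

subsection \<open>The quotient by \<open>Z\<^sub>q\<close> is the algebra of inner \<open>q\<close>-derivations\<close>

definition ider_map :: "('r::comm_ring_1, 'a) lie_alg \<Rightarrow> nat \<Rightarrow> 'a \<Rightarrow> ('a \<Rightarrow> 'a) \<times> 'a" where
  "ider_map M q x = (inner_der M x, lsmul M (of_nat q) x)"

context lie
begin

lemma additive_subgroup_Zq: "additive_subgroup M (Zq M q)"
  unfolding additive_subgroup_def Zq_def lie_center_def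
  by (auto simp: br_add_left smul_add br_neg_left smul_neg)

lemma car_IDer: "car (IDer M q) = ider_map M q ` car M"
  unfolding IDer_def ider_map_def by auto

lemma ider_map_eq_iff:
  assumes "x \<in> car M" "y \<in> car M"
  shows "ider_map M q x = ider_map M q y \<longleftrightarrow> ladd M (lneg M x) y \<in> Zq M q"
proof -
  have "inner_der M x = inner_der M y \<longleftrightarrow> (\<forall>m\<in>car M. lbr M x m = lbr M y m)"
    unfolding inner_der_def by (metis restrict_apply' restrict_ext)
  also have "\<dots> \<longleftrightarrow> (\<forall>m\<in>car M. lbr M (ladd M (lneg M x) y) m = lzero M)"
    using assms by (simp add: br_add_left br_neg_left neg_add_eq_zero_iff)
  moreover have "lsmul M (of_nat q) x = lsmul M (of_nat q) y \<longleftrightarrow>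
      lsmul M (of_nat q) (ladd M (lneg M x) y) = lzero M"
    using assms by (simp add: smul_add smul_neg neg_add_eq_zero_iff)
  ultimately show ?thesis
    using assms unfolding ider_map_def Zq_def lie_center_def by auto
qed

lemma smul_br_cong:
  assumes "x \<in> car M" "y \<in> car M" "p \<in> car M" "p' \<in> car M"
    and "lsmul M a p = lsmul M a x" "lsmul M a p' = lsmul M a y"
  shows "lsmul M a (lbr M p p') = lsmul M a (lbr M x y)"
  using assms by (metis br_smul_left br_smul_right)

lemma qpre_smul:
  assumes "x \<in> car M"
  shows "qpre M q (lsmul M (of_nat q) x) \<in> car M \<and>
    lsmul M (of_nat q) (qpre M q (lsmul M (of_nat q) x)) = lsmul M (of_nat q) x"
proof -
  have "\<exists>m. m \<in> car M \<and> lsmul M (of_nat q) x = lsmul M (of_nat q) m"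
    using assms by blast
  from someI_ex[OF this] show ?thesis
    unfolding qpre_def by auto
qed

text \<open>The second component of the bracket of \<open>IDer(m, q)\<close> is computed from arbitrary
  \<open>q\<close>-th preimages; it is well defined because \<open>q[p, p'] = [q p, p']\<close> only depends on \<open>q p\<close>.\<close>

lemma ider_map_br:
  assumes "x \<in> car M" "y \<in> car M"
  shows "lbr (IDer M q) (ider_map M q x) (ider_map M q y) = ider_map M q (lbr M x y)"
proof -
  have "lsmul M (of_nat q) (lbr M (qpre M q (lsmul M (of_nat q) x)) (qpre M q (lsmul M (of_nat q) y)))
      = lsmul M (of_nat q) (lbr M x y)"
    using smul_br_cong qpre_smul assms by blast
  moreover have "restrict (\<lambda>z. ladd M (inner_der M x (inner_der M y z))
        (lneg M (inner_der M y (inner_der M x z)))) (car M) = inner_der M (lbr M x y)"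
    unfolding inner_der_def using assms by (auto simp: br_br_sub_br_br)
  ultimately show ?thesis
    unfolding IDer_def der_times_q_def ider_map_def by simp
qed

lemma lie_hom_ider_map: "lie_hom M (IDer M q) (ider_map M q)"
  unfolding lie_hom_def
proof (intro conjI ballI allI)
  show "ider_map M q \<in> car M \<rightarrow> car (IDer M q)"
    unfolding car_IDer by blast
next
  fix x y assume "x \<in> car M" "y \<in> car M"
  then show "ider_map M q (ladd M x y) = ladd (IDer M q) (ider_map M q x) (ider_map M q y)"
    unfolding IDer_def der_times_q_def ider_map_def inner_der_def
    by (auto simp: br_add_left smul_add)
  show "ider_map M q (lbr M x y) = lbr (IDer M q) (ider_map M q x) (ider_map M q y)"
    using ider_map_br \<open>x \<in> car M\<close> \<open>y \<in> car M\<close> by simp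
next
  fix a x assume "x \<in> car M"
  then show "ider_map M q (lsmul M a x) = lsmul (IDer M q) a (ider_map M q x)"
    unfolding IDer_def der_times_q_def ider_map_def inner_der_def
    by (auto simp: br_smul_left smul_commute)
qed

lemma lie_quot_Zq_iso_IDer:
  "lie_iso (lie_quot M (Zq M q)) (IDer M q) (\<lambda>C. ider_map M q (lrep C))"
  by (rule lie_quot_iso[OF additive_subgroup_Zq lie_hom_ider_map car_IDer[symmetric] ider_map_eq_iff])

end

lemma lie_isomorphic_quot_Zq_iff_IDer:
  assumes "lie_algebra M"
  shows "lie_isomorphic L (lie_quot M (Zq M q)) \<longleftrightarrow> lie_isomorphic L (IDer M q)"
proof -
  interpret lie M
    by (rule lie.intro[OF assms])
  have "lie_isomorphic (lie_quot M (Zq M q)) (IDer M q)"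
    using lie_quot_Zq_iso_IDer unfolding lie_isomorphic_def by blast
  moreover have "lie_closed (lie_quot M (Zq M q))"
    by (rule lie_closed_lie_quot[OF additive_subgroup_Zq])
  ultimately show ?thesis
    using lie_isomorphic_trans lie_isomorphic_sym by metis
qed

theorem corollary4p3:
  fixes g :: "('r::comm_ring_1, 'a) lie_alg" and q :: nat
  assumes "lie_algebra g"
  shows "q_capable g q TYPE('b) \<longleftrightarrow>
         (\<exists>M :: ('r, 'b) lie_alg. lie_algebra M \<and> lie_isomorphic g (IDer M q))"
  unfolding q_capable_def using lie_isomorphic_quot_Zq_iff_IDer by blast

end
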